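(* The following conditions are equivalent. (i) The sequence $N$ is a semi-free DG $B$-module; (ii) The sequence $N$ is a DG $B$-module; and (iii) For all integers $i$ and $j$ we have $\xi_i=-\alpha_i$, $\tau_i=t$, $\alpha_{i-1}\alpha_i=-t\delta_i$, $\delta_i\alpha_{i+1}=\alpha_{i-1}\delta_{i+1}$, $\delta_{i+j}(\gamma_{i,s} m_j)=\gamma_{i,s} \delta_j(m_j)$, $\alpha_{i+j}(\gamma_{i,s} m_j)=\partial_i^A(\gamma_{i,s})m_j+(-1)^i\gamma_{i,s}\alpha_j(m_j)$ for $s=1,\ldots,r_i$ and for all $m_j\in M_j$. In particular, if $N$ is a DG $B$-module, then $\partial_i^N=\begin{bmatrix}-\alpha_{i-1} & \delta_i \\ t & \alpha_i\end{bmatrix}$.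
   Context: Let $R$ be a commutative noetherian ring. Let $A$ be a (commutative, positively graded) DG $R$-algebra such that each $A_i$ is free over $R$ of finite rank, with fixed basis $\{\gamma_{i,1},\ldots,\gamma_{i,r_i}\}$ of $A_i$. Let $t\in R$, let $K=K^R(t)$ be the Koszul complex $0\to K_1\xrightarrow{t}K_0\to 0$ with bases $1\in K_0$, $e\in K_1$, and let $B=K^R(t)\otimes_R A$. Identify $B_i=(K_1\otimes_R A_{i-1})\oplus(K_0\otimes_R A_i)$ with $A_{i-1}\oplus A_i$, writing $e\otimes a_{i-1}+1\otimes a_i$ as the column vector $\left[\begin{smallmatrix}a_{i-1}\\ a_i\end{smallmatrix}\right]$; then $\partial^B_i=\left[\begin{smallmatrix}-\partial^A_{i-1} & 0\\ t & \partial^A_i\end{smallmatrix}\right]$ and the product is $\left[\begin{smallmatrix}a_{i-1}\\ a_i\end{smallmatrix}\right]\left[\begin{smallmatrix}c_{j-1}\\ c_j\end{smallmatrix}\right]=\left[\begin{smallmatrix}a_{i-1}c_j+(-1)^ia_ic_{j-1}\\ a_ic_j\end{smallmatrix}\right]$. Let $\{\beta_i\}_{i\in\mathbb Z}$ be cardinal numbers with $\beta_i=0$ for $i\ll0$, and set $M_i=\bigoplus_{j\ge0}A_j^{(\beta_{i-j})}$ (direct sums of copies of $A_j$ indexed by $\beta_{i-j}$), with scalar multiplication by $A$ componentwise. Let $\xi_i\colon M_i\to M_{i-1}$, $\tau_i\colon M_i\to M_i$, $\delta_i\colon M_i\to M_{i-2}$, $\alpha_i\colon M_i\to M_{i-1}$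 be $R$-module homomorphisms, set $N_i=M_{i-1}\oplus M_i$ and $\partial^N_i=\left[\begin{smallmatrix}\xi_{i-1}&\delta_i\\ \tau_{i-1}&\alpha_i\end{smallmatrix}\right]\colon N_i\to N_{i-1}$, and let $N$ be the sequence $\cdots\to N_i\xrightarrow{\partial^N_i}N_{i-1}\to\cdots$ (not assumed to be a complex), with $B$ acting by $\left[\begin{smallmatrix}a_{i-1}\\ a_i\end{smallmatrix}\right]\left[\begin{smallmatrix}m_{j-1}\\ m_j\end{smallmatrix}\right]=\left[\begin{smallmatrix}a_{i-1}m_j+(-1)^ia_im_{j-1}\\ a_im_j\end{smallmatrix}\right]$. *)

theory Defs
  imports Main "HOL-Library.Function_Algebras" "HOL-Library.Product_Plus"
begin

definition sgnx :: "int \<Rightarrow> 'x::uminus \<Rightarrow> 'x" where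
  "sgnx i x = (if even i then x else - x)"

definition noetherian_ring :: "'r::comm_ring_1 itself \<Rightarrow> bool" where
  "noetherian_ring (T::'r itself) \<longleftrightarrow>
     (\<forall>I::'r set. (0 \<in> I \<and> (\<forall>x\<in>I. \<forall>y\<in>I. x + y \<in> I) \<and> (\<forall>c. \<forall>x\<in>I. c * x \<in> I))
        \<longrightarrow> (\<exists>S. finite S \<and> S \<subseteq> I \<and> I = {y. \<exists>c. y = (\<Sum>s\<in>S. c s * s)}))"

definition submod :: "('r::comm_ring_1 \<Rightarrow> 'x::ab_group_add \<Rightarrow> 'x) \<Rightarrow> 'x set \<Rightarrow> bool" where
  "submod sc S \<longleftrightarrow> 0 \<in> S \<and> (\<forall>x\<in>S. \<forall>y\<in>S. x + y \<in> S) \<and> (\<forall>x\<in>S. - x \<in> S)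
      \<and> (\<forall>c. \<forall>x\<in>S. sc c x \<in> S)"

definition lin_on :: "('r::comm_ring_1 \<Rightarrow> 'x::ab_group_add \<Rightarrow> 'x) \<Rightarrow> ('r \<Rightarrow> 'y::ab_group_add \<Rightarrow> 'y)
    \<Rightarrow> 'x set \<Rightarrow> 'y set \<Rightarrow> ('x \<Rightarrow> 'y) \<Rightarrow> bool" where
  "lin_on sx sy S T f \<longleftrightarrow> (\<forall>x\<in>S. f x \<in> T) \<and> (\<forall>x\<in>S. \<forall>y\<in>S. f (x + y) = f x + f y)
      \<and> (\<forall>c. \<forall>x\<in>S. f (sx c x) = sy c (f x))"

(* Graded objects: the component of degree i of a graded object is a   *)
(* set  X i  inside an ambient abelian group; degree-indexed operations *)

text \<open>A commutative (strictly graded-commutative), positively graded DG R-algebra.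
  sm = R-scalar multiplication, Ac i = A_i, mu i j : A_i x A_j -> A_(i+j),
  one = unit, dA i : A_i -> A_(i-1).\<close>
definition comm_dg_algebra :: "('r::comm_ring_1 \<Rightarrow> 'a::ab_group_add \<Rightarrow> 'a) \<Rightarrow> (int \<Rightarrow> 'a set)
    \<Rightarrow> (int \<Rightarrow> int \<Rightarrow> 'a \<Rightarrow> 'a \<Rightarrow> 'a) \<Rightarrow> 'a \<Rightarrow> (int \<Rightarrow> 'a \<Rightarrow> 'a) \<Rightarrow> bool" where
  "comm_dg_algebra sm Ac mu one dA \<longleftrightarrow>
     (\<forall>c x y. sm c (x + y) = sm c x + sm c y)
   \<and> (\<forall>c c' x. sm (c + c') x = sm c x + sm c' x)
   \<and> (\<forall>c c' x. sm c (sm c' x) = sm (c * c') x)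
   \<and> (\<forall>x. sm 1 x = x)
   \<and> (\<forall>i. submod sm (Ac i))
   \<and> (\<forall>i<0. Ac i = {0})
   \<and> one \<in> Ac 0
   \<and> (\<forall>i j. \<forall>a\<in>Ac i. \<forall>b\<in>Ac j. mu i j a b \<in> Ac (i + j))
   \<and> (\<forall>i j. \<forall>a\<in>Ac i. \<forall>a'\<in>Ac i. \<forall>b\<in>Ac j. mu i j (a + a') b = mu i j a b + mu i j a' b)
   \<and> (\<forall>i j. \<forall>a\<in>Ac i. \<forall>b\<in>Ac j. \<forall>b'\<in>Ac j. mu i j a (b + b') = mu i j a b + mu i j a b')
   \<and> (\<forall>i j c. \<forall>a\<in>Ac i. \<forall>b\<in>Ac j. mu i j (sm c a) b = sm c (mu i j a b) \<and> mu i j a (sm c b) = sm c (mu i j a b))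
   \<and> (\<forall>i j k. \<forall>a\<in>Ac i. \<forall>b\<in>Ac j. \<forall>c\<in>Ac k. mu (i + j) k (mu i j a b) c = mu i (j + k) a (mu j k b c))
   \<and> (\<forall>i. \<forall>a\<in>Ac i. mu 0 i one a = a \<and> mu i 0 a one = a)
   \<and> (\<forall>i j. \<forall>a\<in>Ac i. \<forall>b\<in>Ac j. mu i j a b = sgnx (i * j) (mu j i b a))
   \<and> (\<forall>i. odd i \<longrightarrow> (\<forall>a\<in>Ac i. mu i i a a = 0))
   \<and> (\<forall>i. lin_on sm sm (Ac i) (Ac (i - 1)) (dA i))
   \<and> (\<forall>i. \<forall>a\<in>Ac i. dA (i - 1) (dA i a) = 0)
   \<and> (\<forall>i j. \<forall>a\<in>Ac i. \<forall>b\<in>Ac j.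
        dA (i + j) (mu i j a b) = mu (i - 1) j (dA i a) b + sgnx i (mu i (j - 1) a (dA j b)))"

definition graded_free_basis :: "('r::comm_ring_1 \<Rightarrow> 'a::ab_group_add \<Rightarrow> 'a) \<Rightarrow> (int \<Rightarrow> 'a set)
    \<Rightarrow> (int \<Rightarrow> nat) \<Rightarrow> (int \<Rightarrow> nat \<Rightarrow> 'a) \<Rightarrow> bool" where
  "graded_free_basis sm Ac r gam \<longleftrightarrow>
     (\<forall>i. (\<forall>s\<in>{1..r i}. gam i s \<in> Ac i)
        \<and> (\<forall>x\<in>Ac i. \<exists>!c::nat \<Rightarrow> 'r. (\<forall>s. s \<notin> {1..r i} \<longrightarrow> c s = 0)
                                 \<and> x = (\<Sum>s=1..r i. sm (c s) (gam i s))))"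

text \<open>B: scalar multiplication smB, components Bc,
  products muB i j, differential dB, unit oneB. N: scalar multiplication smN, components Nc,
  action act i j : B_i x N_j -> N_(i+j), differential dN i : N_i -> N_(i-1).\<close>
definition dg_module :: "('r::comm_ring_1 \<Rightarrow> 'b::ab_group_add \<Rightarrow> 'b) \<Rightarrow> (int \<Rightarrow> 'b set)
    \<Rightarrow> (int \<Rightarrow> int \<Rightarrow> 'b \<Rightarrow> 'b \<Rightarrow> 'b) \<Rightarrow> (int \<Rightarrow> 'b \<Rightarrow> 'b) \<Rightarrow> 'b
    \<Rightarrow> ('r \<Rightarrow> 'n::ab_group_add \<Rightarrow> 'n) \<Rightarrow> (int \<Rightarrow> 'n set)
    \<Rightarrow> (int \<Rightarrow> int \<Rightarrow> 'b \<Rightarrow> 'n \<Rightarrow> 'n) \<Rightarrow> (int \<Rightarrow> 'n \<Rightarrow> 'n) \<Rightarrow> bool" where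
  "dg_module smB Bc muB dB oneB smN Nc act dN \<longleftrightarrow>
     (\<forall>i. submod smN (Nc i))
   \<and> (\<forall>i. lin_on smN smN (Nc i) (Nc (i - 1)) (dN i))
   \<and> (\<forall>i. \<forall>n\<in>Nc i. dN (i - 1) (dN i n) = 0)
   \<and> (\<forall>i j. \<forall>b\<in>Bc i. \<forall>n\<in>Nc j. act i j b n \<in> Nc (i + j))
   \<and> (\<forall>i j. \<forall>b\<in>Bc i. \<forall>b'\<in>Bc i. \<forall>n\<in>Nc j. act i j (b + b') n = act i j b n + act i j b' n)
   \<and> (\<forall>i j. \<forall>b\<in>Bc i. \<forall>n\<in>Nc j. \<forall>n'\<in>Nc j. act i j b (n + n') = act i j b n + act i j b n')
   \<and> (\<forall>i j c. \<forall>b\<in>Bc i. \<forall>n\<in>Nc j.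
        act i j (smB c b) n = smN c (act i j b n) \<and> act i j b (smN c n) = smN c (act i j b n))
   \<and> (\<forall>j. \<forall>n\<in>Nc j. act 0 j oneB n = n)
   \<and> (\<forall>i k j. \<forall>b\<in>Bc i. \<forall>b'\<in>Bc k. \<forall>n\<in>Nc j.
        act (i + k) j (muB i k b b') n = act i (k + j) b (act k j b' n))
   \<and> (\<forall>i j. \<forall>b\<in>Bc i. \<forall>n\<in>Nc j.
        dN (i + j) (act i j b n) = act (i - 1) j (dB i b) n + sgnx i (act i (j - 1) b (dN j n)))"

text \<open>Finite B-linear combinations, landing in degree k, of the homogeneous elements in U
  (an element of U is a pair (degree, element)).\<close>
definition bcomb :: "(int \<Rightarrow> 'b::zero set) \<Rightarrow> (int \<Rightarrow> int \<Rightarrow> 'b \<Rightarrow> 'n \<Rightarrow> 'n::comm_monoid_add)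
    \<Rightarrow> (int \<times> 'n) set \<Rightarrow> int \<Rightarrow> 'n set" where
  "bcomb Bc act U k = {n. \<exists>c. finite {x. c x \<noteq> 0} \<and> (\<forall>x. c x \<noteq> 0 \<longrightarrow> x \<in> U)
       \<and> (\<forall>x\<in>U. c x \<in> Bc (k - fst x))
       \<and> n = (\<Sum>x\<in>{x. c x \<noteq> 0}. act (k - fst x) (fst x) (c x) (snd x))}"

text \<open>Semi-free DG module: a DG module whose underlying graded module has a basis U
  (every homogeneous element is a unique finite B-linear combination of basis elements)
  with an exhaustive increasing filtration F 0 \<subseteq> F 1 \<subseteq> ... such that the differential
  maps F n into the B-span of F (n-1) (F (-1) = {}).\<close>
definition semi_free_dg_module :: "('r::comm_ring_1 \<Rightarrow> 'b::ab_group_add \<Rightarrow> 'b) \<Rightarrow> (int \<Rightarrow> 'b set)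
    \<Rightarrow> (int \<Rightarrow> int \<Rightarrow> 'b \<Rightarrow> 'b \<Rightarrow> 'b) \<Rightarrow> (int \<Rightarrow> 'b \<Rightarrow> 'b) \<Rightarrow> 'b
    \<Rightarrow> ('r \<Rightarrow> 'n::ab_group_add \<Rightarrow> 'n) \<Rightarrow> (int \<Rightarrow> 'n set)
    \<Rightarrow> (int \<Rightarrow> int \<Rightarrow> 'b \<Rightarrow> 'n \<Rightarrow> 'n) \<Rightarrow> (int \<Rightarrow> 'n \<Rightarrow> 'n) \<Rightarrow> bool" where
  "semi_free_dg_module smB Bc muB dB oneB smN Nc act dN \<longleftrightarrow>
     dg_module smB Bc muB dB oneB smN Nc act dN
   \<and> (\<exists>(U :: (int \<times> 'n) set) (F :: nat \<Rightarrow> (int \<times> 'n) set).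
        (\<forall>x\<in>U. snd x \<in> Nc (fst x))
      \<and> (\<forall>k. \<forall>n\<in>Nc k. \<exists>!c. finite {x. c x \<noteq> 0} \<and> (\<forall>x. c x \<noteq> 0 \<longrightarrow> x \<in> U)
             \<and> (\<forall>x\<in>U. c x \<in> Bc (k - fst x))
             \<and> n = (\<Sum>x\<in>{x. c x \<noteq> 0}. act (k - fst x) (fst x) (c x) (snd x)))
      \<and> mono F \<and> (\<Union>m. F m) = U
      \<and> (\<forall>m. \<forall>x\<in>F m. dN (fst x) (snd x) \<in> bcomb Bc act (\<Union>l<m. F l) (fst x - 1)))"

text \<open>B = K^R(t) \<otimes> A, with B_i identified with A_(i-1) \<oplus> A_i (pairs (a_(i-1), a_i)).\<close>
definition Bset :: "(int \<Rightarrow> 'a set) \<Rightarrow> int \<Rightarrow> ('a \<times> 'a) set" where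
  "Bset Ac i = Ac (i - 1) \<times> Ac i"

definition smB :: "('r \<Rightarrow> 'a \<Rightarrow> 'a) \<Rightarrow> 'r \<Rightarrow> 'a \<times> 'a \<Rightarrow> 'a \<times> 'a" where
  "smB sm c b = (sm c (fst b), sm c (snd b))"

definition dB :: "('r \<Rightarrow> 'a::ab_group_add \<Rightarrow> 'a) \<Rightarrow> 'r \<Rightarrow> (int \<Rightarrow> 'a \<Rightarrow> 'a) \<Rightarrow> int \<Rightarrow> 'a \<times> 'a \<Rightarrow> 'a \<times> 'a" where
  "dB sm t dA i b = (- dA (i - 1) (fst b), sm t (fst b) + dA i (snd b))"

definition muB :: "(int \<Rightarrow> int \<Rightarrow> 'a \<Rightarrow> 'a \<Rightarrow> 'a::ab_group_add) \<Rightarrow> int \<Rightarrow> int \<Rightarrow> 'a \<times> 'a \<Rightarrow> 'a \<times> 'a \<Rightarrow> 'a \<times> 'a" where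
  "muB mu i j b c = (mu (i - 1) j (fst b) (snd c) + sgnx i (mu i (j - 1) (snd b) (fst c)),
                     mu i j (snd b) (snd c))"

definition oneB :: "'a::zero \<Rightarrow> 'a \<times> 'a" where
  "oneB one = (0, one)"

text \<open>M_i = \<Oplus>_(j\<ge>0) A_j^(\<beta>_(i-j)): E is the index set of all basis elements, deg e is the degree
  of the basis element e, so \<beta>_k = |{e \<in> E. deg e = k}|. An element of M_i is a finitely supported
  family (m_e)_(e\<in>E) with m_e \<in> A_(i - deg e).\<close>
definition Mset :: "(int \<Rightarrow> 'a::zero set) \<Rightarrow> 'e set \<Rightarrow> ('e \<Rightarrow> int) \<Rightarrow> int \<Rightarrow> ('e \<Rightarrow> 'a) set" where
  "Mset Ac E deg i = {f. finite {e. f e \<noteq> 0} \<and> (\<forall>e. if e \<in> E then f e \<in> Ac (i - deg e) else f e = 0)}"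

definition smM :: "('r \<Rightarrow> 'a \<Rightarrow> 'a) \<Rightarrow> 'r \<Rightarrow> ('e \<Rightarrow> 'a) \<Rightarrow> ('e \<Rightarrow> 'a)" where
  "smM sm c m = (\<lambda>e. sm c (m e))"

definition actM :: "(int \<Rightarrow> int \<Rightarrow> 'a \<Rightarrow> 'a \<Rightarrow> 'a::zero) \<Rightarrow> 'e set \<Rightarrow> ('e \<Rightarrow> int)
    \<Rightarrow> int \<Rightarrow> int \<Rightarrow> 'a \<Rightarrow> ('e \<Rightarrow> 'a) \<Rightarrow> ('e \<Rightarrow> 'a)" where
  "actM mu E deg l j a m = (\<lambda>e. if e \<in> E then mu l (j - deg e) a (m e) else 0)"

text \<open>N_i = M_(i-1) \<oplus> M_i (pairs (m_(i-1), m_i)).\<close>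
definition Nset :: "(int \<Rightarrow> 'a::zero set) \<Rightarrow> 'e set \<Rightarrow> ('e \<Rightarrow> int) \<Rightarrow> int \<Rightarrow> (('e \<Rightarrow> 'a) \<times> ('e \<Rightarrow> 'a)) set" where
  "Nset Ac E deg i = Mset Ac E deg (i - 1) \<times> Mset Ac E deg i"

definition smN :: "('r \<Rightarrow> 'a \<Rightarrow> 'a) \<Rightarrow> 'r \<Rightarrow> ('e \<Rightarrow> 'a) \<times> ('e \<Rightarrow> 'a) \<Rightarrow> ('e \<Rightarrow> 'a) \<times> ('e \<Rightarrow> 'a)" where
  "smN sm c n = (smM sm c (fst n), smM sm c (snd n))"

text \<open>\<partial>^N_i = [[\<xi>_(i-1), \<delta>_i], [\<tau>_(i-1), \<alpha>_i]].\<close>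
definition dN :: "(int \<Rightarrow> ('e \<Rightarrow> 'a) \<Rightarrow> ('e \<Rightarrow> 'a::ab_group_add)) \<Rightarrow> (int \<Rightarrow> ('e \<Rightarrow> 'a) \<Rightarrow> ('e \<Rightarrow> 'a))
    \<Rightarrow> (int \<Rightarrow> ('e \<Rightarrow> 'a) \<Rightarrow> ('e \<Rightarrow> 'a)) \<Rightarrow> (int \<Rightarrow> ('e \<Rightarrow> 'a) \<Rightarrow> ('e \<Rightarrow> 'a))
    \<Rightarrow> int \<Rightarrow> ('e \<Rightarrow> 'a) \<times> ('e \<Rightarrow> 'a) \<Rightarrow> ('e \<Rightarrow> 'a) \<times> ('e \<Rightarrow> 'a)" where
  "dN xi tau delta alpha i n =
     (xi (i - 1) (fst n) + delta i (snd n), tau (i - 1) (fst n) + alpha i (snd n))"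

definition actN :: "(int \<Rightarrow> int \<Rightarrow> 'a \<Rightarrow> 'a \<Rightarrow> 'a::ab_group_add) \<Rightarrow> 'e set \<Rightarrow> ('e \<Rightarrow> int)
    \<Rightarrow> int \<Rightarrow> int \<Rightarrow> 'a \<times> 'a \<Rightarrow> ('e \<Rightarrow> 'a) \<times> ('e \<Rightarrow> 'a) \<Rightarrow> ('e \<Rightarrow> 'a) \<times> ('e \<Rightarrow> 'a)" where
  "actN mu E deg i j b n =
     (actM mu E deg (i - 1) j (fst b) (snd n) + sgnx i (actM mu E deg i (j - 1) (snd b) (fst n)),
      actM mu E deg i j (snd b) (snd n))"

definition N_is_dg_module where
  "N_is_dg_module sm Ac mu one dA t E deg xi tau delta alpha \<longleftrightarrow>
     dg_module (smB sm) (Bset Ac) (muB mu) (dB sm t dA) (oneB one)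
               (smN sm) (Nset Ac E deg) (actN mu E deg) (dN xi tau delta alpha)"

definition N_is_semi_free where
  "N_is_semi_free sm Ac mu one dA t E deg xi tau delta alpha \<longleftrightarrow>
     semi_free_dg_module (smB sm) (Bset Ac) (muB mu) (dB sm t dA) (oneB one)
               (smN sm) (Nset Ac E deg) (actN mu E deg) (dN xi tau delta alpha)"

end

theory Submission
  imports Defs
begin

text \<open>For (ii) \<Rightarrow> (iii), apply the DG-module axioms to elements with a single nonzero entry:
  the Leibniz rule for the Koszul generator \<open>(1, 0) \<in> B\<^sub>1\<close> (whose differential is \<open>t\<close>) acting on
  \<open>(0, m)\<close> forces \<open>\<xi> = -\<alpha>\<close> and \<open>\<tau> = t\<close>; then \<open>\<partial>\<^sup>2(0, m) = 0\<close> yields the two relations between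
  \<open>\<alpha>\<close> and \<open>\<delta>\<close>, and the Leibniz rule for \<open>(0, a) \<in> B\<^sub>i\<close> yields the rules for \<open>\<delta>\<close> and \<open>\<alpha>\<close> on
  \<open>a m\<close>. Conversely, the rules on the basis \<open>\<gamma>\<^sub>i\<^sub>,\<^sub>s\<close> extend by linearity to all of \<open>A\<close>, after which
  \<open>\<partial>\<^sup>2 = 0\<close> and the Leibniz rule for \<open>N\<close> are componentwise computations.
  Finally \<open>N\<close> is free over \<open>B\<close> on the elements \<open>(0, 1\<^sub>e)\<close>, and as their degrees are bounded below,
  filtering them by degree is a semi-free filtration: the differential lowers degree and \<open>B\<close>
  vanishes in negative degrees, so \<open>\<partial>(0, 1\<^sub>e)\<close> only involves generators of smaller degree.\<close>

lemma sum_fun_apply: "(\<Sum>x\<in>S. f x) e = (\<Sum>x\<in>S. f x e :: 'a::comm_monoid_add)"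
  by (induction S rule: infinite_finite_induct) auto

lemma sgnx_0 [simp]: "sgnx i (0::'x::group_add) = 0"
  by (simp add: sgnx_def)

lemma sgnx_sgnx [simp]: "sgnx i (sgnx i (x::'x::group_add)) = x"
  by (simp add: sgnx_def)

lemma sgnx_add: "sgnx i ((x::'x::ab_group_add) + y) = sgnx i x + sgnx i y"
  by (simp add: sgnx_def)

lemma sgnx_pair: "sgnx i (x, y) = (sgnx i x, sgnx i y)"
  by (simp add: sgnx_def)

lemma sgnx_index_add: "sgnx (i + k) (x::'x::group_add) = sgnx i (sgnx k x)"
  by (auto simp: sgnx_def)

lemma sgnx_index_diff_one: "sgnx (i - 1) (x::'x::group_add) = - sgnx i x"
  by (simp add: sgnx_def)

lemma submod_closed:
  assumes "submod sc S"
  shows submod_zero: "0 \<in> S"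
    and submod_add: "x \<in> S \<Longrightarrow> y \<in> S \<Longrightarrow> x + y \<in> S"
    and submod_uminus: "x \<in> S \<Longrightarrow> - x \<in> S"
    and submod_scale: "x \<in> S \<Longrightarrow> sc c x \<in> S"
  using assms unfolding submod_def by blast+

context
  fixes sx :: "'r::comm_ring_1 \<Rightarrow> 'x::ab_group_add \<Rightarrow> 'x" and sy :: "'r \<Rightarrow> 'y::ab_group_add \<Rightarrow> 'y"
    and S T f
  assumes S: "submod sx S" and f: "lin_on sx sy S T f"
begin

lemma lin_on_mem: "x \<in> S \<Longrightarrow> f x \<in> T"
  and lin_on_add: "x \<in> S \<Longrightarrow> y \<in> S \<Longrightarrow> f (x + y) = f x + f y"
  and lin_on_scale: "x \<in> S \<Longrightarrow> f (sx c x) = sy c (f x)"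
  using f unfolding lin_on_def by blast+

lemma lin_on_zero: "f 0 = 0"
  using lin_on_add[of 0 0] submod_zero[OF S] by simp

lemma lin_on_uminus: "x \<in> S \<Longrightarrow> f (- x) = - f x"
  using lin_on_add[of x "- x"] submod_uminus[OF S] lin_on_zero
  by (simp add: eq_neg_iff_add_eq_0 add.commute)

lemma lin_on_diff: "x \<in> S \<Longrightarrow> y \<in> S \<Longrightarrow> f (x - y) = f x - f y"
  using lin_on_add[of x "- y"] lin_on_uminus[of y] submod_uminus[OF S] by simp

lemma lin_on_sgnx: "x \<in> S \<Longrightarrow> f (sgnx k x) = sgnx k (f x)"
  by (simp add: sgnx_def lin_on_uminus)

end

text \<open>Of the axioms of a commutative DG algebra only the following enter the argument.\<close>
locale dg_algebra =
  fixes sm :: "'r::comm_ring_1 \<Rightarrow> 'a::ab_group_add \<Rightarrow> 'a"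
    and Ac :: "int \<Rightarrow> 'a set"
    and mu :: "int \<Rightarrow> int \<Rightarrow> 'a \<Rightarrow> 'a \<Rightarrow> 'a"
    and one :: 'a
    and dA :: "int \<Rightarrow> 'a \<Rightarrow> 'a"
  assumes sm_add_all: "\<forall>c x y. sm c (x + y) = sm c x + sm c y"
    and Ac_submod: "\<forall>i. submod sm (Ac i)"
    and Ac_negative_all: "\<forall>i<0. Ac i = {0}"
    and one_mem: "one \<in> Ac 0"
    and mu_mem_all: "\<forall>i j. \<forall>a\<in>Ac i. \<forall>b\<in>Ac j. mu i j a b \<in> Ac (i + j)"
    and mu_add_left_all: "\<forall>i j. \<forall>a\<in>Ac i. \<forall>a'\<in>Ac i. \<forall>b\<in>Ac j. mu i j (a + a') b = mu i j a b + mu i j a' b"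
    and mu_add_right_all: "\<forall>i j. \<forall>a\<in>Ac i. \<forall>b\<in>Ac j. \<forall>b'\<in>Ac j. mu i j a (b + b') = mu i j a b + mu i j a b'"
    and mu_scale_all: "\<forall>i j c. \<forall>a\<in>Ac i. \<forall>b\<in>Ac j.
          mu i j (sm c a) b = sm c (mu i j a b) \<and> mu i j a (sm c b) = sm c (mu i j a b)"
    and mu_assoc_all: "\<forall>i j k. \<forall>a\<in>Ac i. \<forall>b\<in>Ac j. \<forall>c\<in>Ac k.
          mu (i + j) k (mu i j a b) c = mu i (j + k) a (mu j k b c)"
    and mu_one_all: "\<forall>i. \<forall>a\<in>Ac i. mu 0 i one a = a \<and> mu i 0 a one = a"
    and dA_lin: "\<forall>i. lin_on sm sm (Ac i) (Ac (i - 1)) (dA i)"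
begin

lemmas sm_add = sm_add_all[rule_format]
  and Ac_negative = Ac_negative_all[rule_format]
  and mu_add_left = mu_add_left_all[rule_format]
  and mu_add_right = mu_add_right_all[rule_format]
  and mu_scale_left = mu_scale_all[rule_format, THEN conjunct1]
  and mu_scale_right = mu_scale_all[rule_format, THEN conjunct2]
  and mu_assoc = mu_assoc_all[rule_format]
  and mu_one_left = mu_one_all[rule_format, THEN conjunct1]
  and mu_one_right = mu_one_all[rule_format, THEN conjunct2]

lemma Ac_zero [simp]: "0 \<in> Ac i"
  and Ac_add [simp]: "x \<in> Ac i \<Longrightarrow> y \<in> Ac i \<Longrightarrow> x + y \<in> Ac i"
  and Ac_uminus [simp]: "x \<in> Ac i \<Longrightarrow> - x \<in> Ac i"
  and Ac_scale [simp]: "x \<in> Ac i \<Longrightarrow> sm c x \<in> Ac i"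
  using submod_closed[OF Ac_submod[rule_format]] by blast+

lemma Ac_sgnx [simp]: "x \<in> Ac i \<Longrightarrow> sgnx k x \<in> Ac i"
  by (simp add: sgnx_def)

lemma mu_mem [simp]: "a \<in> Ac i \<Longrightarrow> b \<in> Ac j \<Longrightarrow> k = i + j \<Longrightarrow> mu i j a b \<in> Ac k"
  using mu_mem_all by blast

lemma dA_mem [simp]: "a \<in> Ac i \<Longrightarrow> k = i - 1 \<Longrightarrow> dA i a \<in> Ac k"
  using lin_on_mem[OF Ac_submod[rule_format] dA_lin[rule_format]] by blast

lemma dA_zero [simp]: "dA i 0 = 0"
  using lin_on_zero[OF Ac_submod[rule_format] dA_lin[rule_format]] .

lemma dA_add: "a \<in> Ac i \<Longrightarrow> b \<in> Ac i \<Longrightarrow> dA i (a + b) = dA i a + dA i b"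
  and dA_scale: "a \<in> Ac i \<Longrightarrow> dA i (sm c a) = sm c (dA i a)"
  using lin_on_add[OF Ac_submod[rule_format] dA_lin[rule_format]]
    lin_on_scale[OF Ac_submod[rule_format] dA_lin[rule_format]] by blast+

lemma sm_zero [simp]: "sm c 0 = 0"
  using sm_add[of c 0 0] by simp

lemma sm_uminus: "sm c (- x) = - sm c x"
  using sm_add[of c x "- x"] by (simp add: eq_neg_iff_add_eq_0 add.commute)

lemma mu_zero_left [simp]: "b \<in> Ac j \<Longrightarrow> mu i j 0 b = 0"
  using mu_add_left[of 0 i 0 b j] by simp

lemma mu_zero_right [simp]: "a \<in> Ac i \<Longrightarrow> mu i j a 0 = 0"
  using mu_add_right[of a i 0 j 0] by simp

lemma mu_uminus_left: "a \<in> Ac i \<Longrightarrow> b \<in> Ac j \<Longrightarrow> mu i j (- a) b = - mu i j a b"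
  using mu_add_left[of a i "- a" b j] by (simp add: eq_neg_iff_add_eq_0 add.commute)

lemma mu_uminus_right: "a \<in> Ac i \<Longrightarrow> b \<in> Ac j \<Longrightarrow> mu i j a (- b) = - mu i j a b"
  using mu_add_right[of a i b j "- b"] by (simp add: eq_neg_iff_add_eq_0 add.commute)

lemma dA_degree_zero_one: "dA 0 one = 0"
  using dA_mem[OF one_mem, of "- 1"] Ac_negative[of "- 1"] by simp

lemma graded_free_basis_induct:
  assumes basis: "graded_free_basis sm Ac r gam" and a: "a \<in> Ac i"
    and zero: "P 0" and gen: "\<And>s. s \<in> {1..r i} \<Longrightarrow> P (gam i s)"
    and step: "\<And>c a b. a \<in> Ac i \<Longrightarrow> b \<in> Ac i \<Longrightarrow> P a \<Longrightarrow> P b \<Longrightarrow> P (sm c a + b)"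
  shows "P a"
proof -
  obtain c where c: "a = (\<Sum>s=1..r i. sm (c s) (gam i s))"
    using basis a unfolding graded_free_basis_def by blast
  have gam: "gam i s \<in> Ac i" if "s \<in> {1..r i}" for s
    using basis that unfolding graded_free_basis_def by blast
  have "(\<Sum>s\<in>S. sm (c s) (gam i s)) \<in> Ac i \<and> P (\<Sum>s\<in>S. sm (c s) (gam i s))"
    if "finite S" "S \<subseteq> {1..r i}" for S
    using that
  proof (induction S rule: finite_induct)
    case (insert s S)
    then show ?case
      using step[of "gam i s"] gam gen by auto
  qed (simp add: zero)
  then show ?thesis
    using c by simp
qed

lemma Ac_trivial_if_one_zero: "one = 0 \<Longrightarrow> a \<in> Ac i \<Longrightarrow> a = 0"
  using mu_one_right[of a i] by simp

end

lemma comm_dg_algebra_imp_dg_algebra: "comm_dg_algebra sm Ac mu one dA \<Longrightarrow> dg_algebra sm Ac mu one dA"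
  unfolding comm_dg_algebra_def dg_algebra_def by (elim conjE) (intro conjI; assumption)

locale free_dg_module = dg_algebra sm Ac mu one dA
  for sm :: "'r::comm_ring_1 \<Rightarrow> 'a::ab_group_add \<Rightarrow> 'a" and Ac mu one dA +
  fixes E :: "'e set" and deg :: "'e \<Rightarrow> int"
begin

abbreviation "M \<equiv> Mset Ac E deg"
abbreviation "aM \<equiv> actM mu E deg"
abbreviation "aN \<equiv> actN mu E deg"

lemma M_mem_E: "m \<in> M i \<Longrightarrow> e \<in> E \<Longrightarrow> m e \<in> Ac (i - deg e)"
  and M_not_E: "m \<in> M i \<Longrightarrow> e \<notin> E \<Longrightarrow> m e = 0"
  and M_finite_support: "m \<in> M i \<Longrightarrow> finite {e. m e \<noteq> 0}"
  unfolding Mset_def by (auto split: if_splits)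

lemma M_memI:
  "finite {e. m e \<noteq> 0} \<Longrightarrow> (\<And>e. e \<in> E \<Longrightarrow> m e \<in> Ac (i - deg e)) \<Longrightarrow> (\<And>e. e \<notin> E \<Longrightarrow> m e = 0)
    \<Longrightarrow> m \<in> M i"
  unfolding Mset_def by auto

lemma M_zero [simp]: "0 \<in> M i"
  by (auto simp: Mset_def)

lemma M_add [simp]:
  assumes "x \<in> M i" "y \<in> M i"
  shows "x + y \<in> M i"
proof (rule M_memI)
  have "{e. (x + y) e \<noteq> 0} \<subseteq> {e. x e \<noteq> 0} \<union> {e. y e \<noteq> 0}"
    by auto
  then show "finite {e. (x + y) e \<noteq> 0}"
    using assms M_finite_support finite_subset by blast
qed (auto simp: assms M_mem_E[OF assms(1)] M_mem_E[OF assms(2)] M_not_E[OF assms(1)] M_not_E[OF assms(2)])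

lemma M_uminus [simp]: "x \<in> M i \<Longrightarrow> - x \<in> M i"
  by (rule M_memI) (auto simp: M_finite_support M_mem_E M_not_E)

lemma M_scale [simp]:
  assumes "x \<in> M i"
  shows "smM sm c x \<in> M i"
proof (rule M_memI)
  show "finite {e. smM sm c x e \<noteq> 0}"
    using M_finite_support[OF assms] by (rule finite_subset[rotated]) (auto simp: smM_def)
qed (auto simp: smM_def M_mem_E[OF assms] M_not_E[OF assms])

lemma M_submod: "submod (smM sm) (M i)"
  unfolding submod_def by simp

lemma M_diff [simp]: "x \<in> M i \<Longrightarrow> y \<in> M i \<Longrightarrow> x - y \<in> M i"
  using M_add[of x i "- y"] M_uminus[of y i] by simp

lemma M_sgnx [simp]: "x \<in> M i \<Longrightarrow> sgnx k x \<in> M i"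
  by (simp add: sgnx_def)

lemma smM_add: "smM sm c (x + y) = smM sm c x + smM sm c y"
  and smM_uminus: "smM sm c (- x) = - smM sm c x"
  and smM_sgnx: "smM sm c (sgnx k x) = sgnx k (smM sm c x)"
  by (auto simp: smM_def sm_add sm_uminus sgnx_def)

lemma smM_diff: "smM sm c (x - y) = smM sm c x - smM sm c y"
  using smM_add[of c x "- y"] smM_uminus[of c y] by simp

lemma actM_mem [simp]:
  assumes "a \<in> Ac l" "m \<in> M j" "k = l + j"
  shows "aM l j a m \<in> M k"
proof (rule M_memI)
  show "finite {e. aM l j a m e \<noteq> 0}"
    using M_finite_support[OF assms(2)] by (rule finite_subset[rotated]) (auto simp: actM_def assms(1))
qed (use assms M_mem_E in \<open>auto simp: actM_def\<close>)

lemma actM_add_left: "a \<in> Ac l \<Longrightarrow> a' \<in> Ac l \<Longrightarrow> m \<in> M j \<Longrightarrow> aM l j (a + a') m = aM l j a m + aM l j a' m"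
  and actM_add_right: "a \<in> Ac l \<Longrightarrow> m \<in> M j \<Longrightarrow> m' \<in> M j \<Longrightarrow> aM l j a (m + m') = aM l j a m + aM l j a m'"
  and actM_uminus_left: "a \<in> Ac l \<Longrightarrow> m \<in> M j \<Longrightarrow> aM l j (- a) m = - aM l j a m"
  and actM_uminus_right: "a \<in> Ac l \<Longrightarrow> m \<in> M j \<Longrightarrow> aM l j a (- m) = - aM l j a m"
  and actM_scale_left: "a \<in> Ac l \<Longrightarrow> m \<in> M j \<Longrightarrow> aM l j (sm c a) m = smM sm c (aM l j a m)"
  and actM_scale_right: "a \<in> Ac l \<Longrightarrow> m \<in> M j \<Longrightarrow> aM l j a (smM sm c m) = smM sm c (aM l j a m)"
  and actM_one: "m \<in> M j \<Longrightarrow> aM 0 j one m = m"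
  by (auto simp: actM_def smM_def fun_eq_iff M_mem_E M_not_E
      mu_add_left mu_add_right mu_uminus_left mu_uminus_right mu_scale_left mu_scale_right mu_one_left)

lemma actM_zero_left [simp]: "m \<in> M j \<Longrightarrow> aM l j 0 m = 0"
  and actM_zero_right [simp]: "a \<in> Ac l \<Longrightarrow> aM l j a 0 = 0"
  by (auto simp: actM_def fun_eq_iff M_mem_E)

lemma actM_diff_right: "a \<in> Ac l \<Longrightarrow> m \<in> M j \<Longrightarrow> m' \<in> M j \<Longrightarrow> aM l j a (m - m') = aM l j a m - aM l j a m'"
  using actM_add_right[of a l m j "- m'"] actM_uminus_right[of a l m' j] by simp

lemma actM_sgnx_left: "a \<in> Ac l \<Longrightarrow> m \<in> M j \<Longrightarrow> aM l j (sgnx k a) m = sgnx k (aM l j a m)"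
  and actM_sgnx_right: "a \<in> Ac l \<Longrightarrow> m \<in> M j \<Longrightarrow> aM l j a (sgnx k m) = sgnx k (aM l j a m)"
  by (simp_all add: sgnx_def actM_uminus_left actM_uminus_right)

lemma actM_assoc:
  assumes "a \<in> Ac l" "c \<in> Ac l'" "m \<in> M j" "p = l + l'" "q = l' + j"
  shows "aM p j (mu l l' a c) m = aM l q a (aM l' j c m)"
proof
  fix e
  show "aM p j (mu l l' a c) m e = aM l q a (aM l' j c m) e"
    using mu_assoc[OF assms(1,2) M_mem_E[OF assms(3)], of e] assms(4,5)
    by (simp add: actM_def algebra_simps)
qed

lemmas actM_linear_simps = actM_add_left actM_add_right actM_uminus_left actM_uminus_right
  actM_diff_right actM_scale_left actM_scale_right actM_sgnx_left actM_sgnx_right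
  smM_add smM_uminus smM_diff smM_sgnx sgnx_add

definition basis_vec :: "'e \<Rightarrow> 'e \<Rightarrow> 'a" where
  "basis_vec e = (\<lambda>e'. if e' = e then one else 0)"

definition generator :: "'e \<Rightarrow> int \<times> ('e \<Rightarrow> 'a) \<times> ('e \<Rightarrow> 'a)" where
  "generator e = (deg e, (0, basis_vec e))"

abbreviation "generators \<equiv> generator ` E"

abbreviation B_coeffs :: "int \<Rightarrow> (int \<times> ('e \<Rightarrow> 'a) \<times> ('e \<Rightarrow> 'a) \<Rightarrow> 'a \<times> 'a) \<Rightarrow> bool" where
  "B_coeffs k c \<equiv> finite {x. c x \<noteq> 0} \<and> (\<forall>x. c x \<noteq> 0 \<longrightarrow> x \<in> generators)
     \<and> (\<forall>x\<in>generators. c x \<in> Bset Ac (k - fst x))"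

abbreviation B_lincomb :: "int \<Rightarrow> (int \<times> ('e \<Rightarrow> 'a) \<times> ('e \<Rightarrow> 'a) \<Rightarrow> 'a \<times> 'a) \<Rightarrow> ('e \<Rightarrow> 'a) \<times> ('e \<Rightarrow> 'a)" where
  "B_lincomb k c \<equiv> \<Sum>x\<in>{x. c x \<noteq> 0}. aN (k - fst x) (fst x) (c x) (snd x)"

lemma basis_vec_mem: "e \<in> E \<Longrightarrow> basis_vec e \<in> M (deg e)"
  by (rule M_memI) (auto simp: basis_vec_def one_mem)

lemma generator_inj_on: "one \<noteq> 0 \<Longrightarrow> inj_on generator E"
  by (rule inj_onI) (auto simp: generator_def basis_vec_def fun_eq_iff split: if_splits)

lemma actN_generator:
  assumes "e \<in> E" and "b \<in> Bset Ac l"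
  shows "aN l (deg e) b (0, basis_vec e)
           = (\<lambda>e'. if e' = e then fst b else 0, \<lambda>e'. if e' = e then snd b else 0)"
  using assms by (auto simp: actN_def actM_def basis_vec_def Bset_def mu_one_right fun_eq_iff zero_fun_def sgnx_def)

lemma B_lincomb_eq:
  assumes one: "one \<noteq> 0" and c: "B_coeffs k c"
  shows "B_lincomb k c = (\<lambda>e. if e \<in> E then fst (c (generator e)) else 0,
                          \<lambda>e. if e \<in> E then snd (c (generator e)) else 0)"
proof -
  let ?S = "{x. c x \<noteq> 0}"
  let ?t = "\<lambda>x. (\<lambda>e. if e \<in> E \<and> x = generator e then fst (c x) else 0,
                  \<lambda>e. if e \<in> E \<and> x = generator e then snd (c x) else 0)"
  have summand: "aN (k - fst x) (fst x) (c x) (snd x) = ?t x" if x: "x \<in> ?S" for x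
  proof -
    obtain e' where e': "e' \<in> E" "x = generator e'"
      using x c by blast
    have "e \<in> E \<and> x = generator e \<longleftrightarrow> e = e'" for e
      using e' generator_inj_on[OF one] by (auto dest: inj_onD)
    then show ?thesis
      using actN_generator[OF e'(1), of "c x" "k - deg e'"] c e' by (simp add: generator_def)
  qed
  have pointwise: "(\<Sum>x\<in>?S. (\<lambda>e. if e \<in> E \<and> x = generator e then h x else 0))
                   = (\<lambda>e. if e \<in> E then h (generator e) else 0)"
    if "\<And>x. c x = 0 \<Longrightarrow> h x = 0" for h :: "_ \<Rightarrow> 'a"
    using c that by (auto simp: fun_eq_iff sum_fun_apply sum.delta')
  have "B_lincomb k c = (\<Sum>x\<in>?S. ?t x)"
    using summand by (rule sum.cong[OF refl])
  also have "\<dots> = (\<lambda>e. if e \<in> E then fst (c (generator e)) else 0,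
                   \<lambda>e. if e \<in> E then snd (c (generator e)) else 0)"
    by (simp add: sum_prod pointwise)
  finally show ?thesis .
qed

text \<open>If \<open>1 = 0\<close> all generators collapse to \<open>(deg e, 0, 0)\<close>, so coordinates are unique
  only because \<open>B\<close> itself is zero.\<close>
lemma B_coeffs_trivial:
  assumes "one = 0" and "B_coeffs k c"
  shows "c = (\<lambda>_. 0)"
proof
  fix x
  show "c x = 0"
  proof (rule ccontr)
    assume "c x \<noteq> 0"
    then have "c x \<in> Bset Ac (k - fst x)"
      using assms(2) by blast
    then show False
      using \<open>c x \<noteq> 0\<close> Ac_trivial_if_one_zero[OF assms(1)] by (auto simp: Bset_def zero_prod_def)
  qed
qed

lemma B_lincomb_unique:
  assumes c: "B_coeffs k c" and c': "B_coeffs k c'" and eq: "B_lincomb k c = B_lincomb k c'"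
  shows "c = c'"
proof (cases "one = 0")
  case True
  then show ?thesis
    using B_coeffs_trivial[OF True c] B_coeffs_trivial[OF True c'] by simp
next
  case False
  show ?thesis
  proof
    fix x
    show "c x = c' x"
    proof (cases "x \<in> generators")
      case True
      then obtain e where e: "e \<in> E" "x = generator e"
        by blast
      have "fst (B_lincomb k c) e = fst (B_lincomb k c') e" "snd (B_lincomb k c) e = snd (B_lincomb k c') e"
        using eq by simp_all
      then show ?thesis
        using e(1) unfolding e(2) B_lincomb_eq[OF False c] B_lincomb_eq[OF False c'] by (simp add: prod_eq_iff)
    next
      case False
      then have "c x = 0" "c' x = 0"
        using c c' by blast+
      then show ?thesis
        by simp
    qed
  qed
qed

lemma B_lincomb_exists:
  assumes n: "n \<in> Nset Ac E deg k"
  shows "\<exists>c. B_coeffs k c \<and> n = B_lincomb k c"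
proof (cases "one = 0")
  case True
  have "M i = {0}" for i
    using Ac_trivial_if_one_zero[OF True] M_mem_E M_not_E by (fastforce simp: fun_eq_iff)
  then have "n = 0"
    using n by (auto simp: Nset_def zero_prod_def)
  then show ?thesis
    by (intro exI[of _ "\<lambda>_. 0"]) (auto simp: Bset_def zero_prod_def)
next
  case False
  define coord where
    "coord x = (if x \<in> generators then (fst n (the_inv_into E generator x), snd n (the_inv_into E generator x)) else 0)"
    for x
  have coord_generator: "coord (generator e) = (fst n e, snd n e)" if "e \<in> E" for e
    using that generator_inj_on[OF False] by (simp add: coord_def the_inv_into_f_f)
  have fst_n: "fst n \<in> M (k - 1)" and snd_n: "snd n \<in> M k"
    using n by (auto simp: Nset_def)
  have "{x. coord x \<noteq> 0} \<subseteq> generator ` ({e. fst n e \<noteq> 0} \<union> {e. snd n e \<noteq> 0})"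
    by (auto simp: coord_def zero_prod_def f_the_inv_into_f[OF generator_inj_on[OF False]]
        intro!: image_eqI[where x = "the_inv_into E generator _"])
  then have "finite {x. coord x \<noteq> 0}"
    using M_finite_support[OF fst_n] M_finite_support[OF snd_n] finite_subset by blast
  moreover have "\<forall>x\<in>generators. coord x \<in> Bset Ac (k - fst x)"
    using M_mem_E[OF fst_n] M_mem_E[OF snd_n] coord_generator
    by (auto simp: Bset_def generator_def algebra_simps)
  moreover have "\<forall>x. coord x \<noteq> 0 \<longrightarrow> x \<in> generators"
    by (auto simp: coord_def)
  ultimately have coeffs: "B_coeffs k coord"
    by blast
  have "B_lincomb k coord = n"
    using B_lincomb_eq[OF False coeffs] coord_generator M_not_E[OF fst_n] M_not_E[OF snd_n]
    by (auto simp: prod_eq_iff fun_eq_iff)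
  then show ?thesis
    using coeffs by auto
qed

lemma N_free_over_B:
  "n \<in> Nset Ac E deg k \<Longrightarrow> \<exists>!c. B_coeffs k c \<and> n = B_lincomb k c"
proof -
  assume "n \<in> Nset Ac E deg k"
  then obtain c where "B_coeffs k c" "n = B_lincomb k c"
    using B_lincomb_exists by blast
  then show ?thesis
    using B_lincomb_unique by (intro ex1I[of _ c]) auto
qed

lemma Bset_zero: "0 \<in> Bset Ac k"
  by (simp add: Bset_def zero_prod_def)

lemma Bset_negative: "k < 0 \<Longrightarrow> b \<in> Bset Ac k \<Longrightarrow> b = 0"
  using Ac_negative[of k] Ac_negative[of "k - 1"] by (auto simp: Bset_def zero_prod_def)

lemma bcomb_mono: "U \<subseteq> U' \<Longrightarrow> bcomb (Bset Ac) act U k \<subseteq> bcomb (Bset Ac) act U' k"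
  unfolding bcomb_def by (force simp: Bset_zero)

lemma N_in_span_of_lower_generators:
  assumes "n \<in> Nset Ac E deg k"
  shows "n \<in> bcomb (Bset Ac) aN {x \<in> generators. fst x \<le> k} k"
proof -
  obtain c where c: "B_coeffs k c" and n: "n = B_lincomb k c"
    using B_lincomb_exists[OF assms] by blast
  have "fst x \<le> k" if "c x \<noteq> 0" for x
    using that c Bset_negative[of "k - fst x" "c x"] by force
  then show ?thesis
    unfolding bcomb_def using c n by blast
qed

lemma actN_mem:
  "b \<in> Bset Ac i \<Longrightarrow> n \<in> Nset Ac E deg j \<Longrightarrow> aN i j b n \<in> Nset Ac E deg (i + j)"
  by (auto simp: Bset_def Nset_def actN_def)

lemma actN_add_left:
  "b \<in> Bset Ac i \<Longrightarrow> b' \<in> Bset Ac i \<Longrightarrow> n \<in> Nset Ac E deg j \<Longrightarrow> aN i j (b + b') n = aN i j b n + aN i j b' n"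
  and actN_add_right:
  "b \<in> Bset Ac i \<Longrightarrow> n \<in> Nset Ac E deg j \<Longrightarrow> n' \<in> Nset Ac E deg j \<Longrightarrow> aN i j b (n + n') = aN i j b n + aN i j b n'"
  and actN_scale:
  "b \<in> Bset Ac i \<Longrightarrow> n \<in> Nset Ac E deg j
    \<Longrightarrow> aN i j (smB sm c b) n = smN sm c (aN i j b n) \<and> aN i j b (smN sm c n) = smN sm c (aN i j b n)"
  and actN_one: "n \<in> Nset Ac E deg j \<Longrightarrow> aN 0 j (oneB one) n = n"
  by (auto simp: Bset_def Nset_def actN_def smB_def smN_def oneB_def actM_one actM_linear_simps algebra_simps sgnx_def)

lemma actN_assoc:
  assumes "b \<in> Bset Ac i" "b' \<in> Bset Ac k" "n \<in> Nset Ac E deg j"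
  shows "aN (i + k) j (muB mu i k b b') n = aN i (k + j) b (aN k j b' n)"
proof -
  obtain a1 a2 c1 c2 m1 m2 where b: "b = (a1, a2)" and b': "b' = (c1, c2)" and n: "n = (m1, m2)"
    by (metis prod.collapse)
  have mem: "a1 \<in> Ac (i - 1)" "a2 \<in> Ac i" "c1 \<in> Ac (k - 1)" "c2 \<in> Ac k" "m1 \<in> M (j - 1)" "m2 \<in> M j"
    using assms by (auto simp: b b' n Bset_def Nset_def)
  have "aM (i + k - 1) j (mu (i - 1) k a1 c2) m2 = aM (i - 1) (k + j) a1 (aM k j c2 m2)"
    and "aM (i + k - 1) j (mu i (k - 1) a2 c1) m2 = aM i (k + j - 1) a2 (aM (k - 1) j c1 m2)"
    and "aM (i + k) (j - 1) (mu i k a2 c2) m1 = aM i (k + j - 1) a2 (aM k (j - 1) c2 m1)"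
    and "aM (i + k) j (mu i k a2 c2) m2 = aM i (k + j) a2 (aM k j c2 m2)"
    by (rule actM_assoc; use mem in simp)+
  then show ?thesis
    using mem by (simp add: b b' n actN_def muB_def actM_linear_simps sgnx_index_add)
qed

end

locale koszul_sequence = free_dg_module sm Ac mu one dA E deg
  for sm :: "'r::comm_ring_1 \<Rightarrow> 'a::ab_group_add \<Rightarrow> 'a" and Ac mu one dA and E :: "'e set" and deg +
  fixes t :: 'r and xi tau delta alpha :: "int \<Rightarrow> ('e \<Rightarrow> 'a) \<Rightarrow> ('e \<Rightarrow> 'a)"
  assumes xi_lin: "\<forall>i. lin_on (smM sm) (smM sm) (Mset Ac E deg i) (Mset Ac E deg (i - 1)) (xi i)"
    and tau_lin: "\<forall>i. lin_on (smM sm) (smM sm) (Mset Ac E deg i) (Mset Ac E deg i) (tau i)"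
    and delta_lin: "\<forall>i. lin_on (smM sm) (smM sm) (Mset Ac E deg i) (Mset Ac E deg (i - 2)) (delta i)"
    and alpha_lin: "\<forall>i. lin_on (smM sm) (smM sm) (Mset Ac E deg i) (Mset Ac E deg (i - 1)) (alpha i)"
begin

abbreviation "diffN \<equiv> dN xi tau delta alpha"
abbreviation "DG \<equiv> N_is_dg_module sm Ac mu one dA t E deg xi tau delta alpha"

lemmas xi_add = lin_on_add[OF M_submod xi_lin[rule_format]]
  and tau_add = lin_on_add[OF M_submod tau_lin[rule_format]]
  and delta_add = lin_on_add[OF M_submod delta_lin[rule_format]]
  and alpha_add = lin_on_add[OF M_submod alpha_lin[rule_format]]
  and xi_scale = lin_on_scale[OF M_submod xi_lin[rule_format]]
  and tau_scale = lin_on_scale[OF M_submod tau_lin[rule_format]]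
  and delta_scale = lin_on_scale[OF M_submod delta_lin[rule_format]]
  and alpha_scale = lin_on_scale[OF M_submod alpha_lin[rule_format]]
  and delta_uminus = lin_on_uminus[OF M_submod delta_lin[rule_format]]
  and alpha_uminus = lin_on_uminus[OF M_submod alpha_lin[rule_format]]
  and delta_diff = lin_on_diff[OF M_submod delta_lin[rule_format]]
  and alpha_diff = lin_on_diff[OF M_submod alpha_lin[rule_format]]
  and delta_sgnx = lin_on_sgnx[OF M_submod delta_lin[rule_format]]
  and alpha_sgnx = lin_on_sgnx[OF M_submod alpha_lin[rule_format]]

lemma xi_zero [simp]: "xi i 0 = 0"
  and tau_zero [simp]: "tau i 0 = 0"
  and delta_zero [simp]: "delta i 0 = 0"
  and alpha_zero [simp]: "alpha i 0 = 0"
  by (simp_all add: lin_on_zero[OF M_submod xi_lin[rule_format]] lin_on_zero[OF M_submod tau_lin[rule_format]]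
      lin_on_zero[OF M_submod delta_lin[rule_format]] lin_on_zero[OF M_submod alpha_lin[rule_format]])

lemmas delta_alpha_linear_simps = delta_add alpha_add delta_scale alpha_scale
  delta_uminus alpha_uminus delta_diff alpha_diff delta_sgnx alpha_sgnx

lemma xi_mem [simp]: "x \<in> M i \<Longrightarrow> k = i - 1 \<Longrightarrow> xi i x \<in> M k"
  and tau_mem [simp]: "x \<in> M i \<Longrightarrow> k = i \<Longrightarrow> tau i x \<in> M k"
  and delta_mem [simp]: "x \<in> M i \<Longrightarrow> k = i - 2 \<Longrightarrow> delta i x \<in> M k"
  and alpha_mem [simp]: "x \<in> M i \<Longrightarrow> k = i - 1 \<Longrightarrow> alpha i x \<in> M k"
  by (simp_all add: lin_on_mem[OF M_submod xi_lin[rule_format]] lin_on_mem[OF M_submod tau_lin[rule_format]]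
      lin_on_mem[OF M_submod delta_lin[rule_format]] lin_on_mem[OF M_submod alpha_lin[rule_format]])

lemma N_submod: "submod (smN sm) (Nset Ac E deg i)"
  unfolding submod_def Nset_def by (auto simp: smN_def zero_prod_def)

lemma dN_lin: "lin_on (smN sm) (smN sm) (Nset Ac E deg i) (Nset Ac E deg (i - 1)) (diffN i)"
  unfolding lin_on_def Nset_def
  by (auto simp: dN_def smN_def xi_add tau_add delta_add alpha_add
      xi_scale tau_scale delta_scale alpha_scale smM_add algebra_simps)

lemma N_semi_free_basis:
  assumes "\<exists>n0. \<forall>e\<in>E. n0 \<le> deg e"
  shows "\<exists>(U :: (int \<times> ('e \<Rightarrow> 'a) \<times> ('e \<Rightarrow> 'a)) set) (F :: nat \<Rightarrow> _ set).
        (\<forall>x\<in>U. snd x \<in> Nset Ac E deg (fst x))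
      \<and> (\<forall>k. \<forall>n\<in>Nset Ac E deg k. \<exists>!c. finite {x. c x \<noteq> 0} \<and> (\<forall>x. c x \<noteq> 0 \<longrightarrow> x \<in> U)
             \<and> (\<forall>x\<in>U. c x \<in> Bset Ac (k - fst x))
             \<and> n = (\<Sum>x\<in>{x. c x \<noteq> 0}. aN (k - fst x) (fst x) (c x) (snd x)))
      \<and> mono F \<and> (\<Union>m. F m) = U
      \<and> (\<forall>m. \<forall>x\<in>F m. diffN (fst x) (snd x) \<in> bcomb (Bset Ac) aN (\<Union>l<m. F l) (fst x - 1))"
proof -
  obtain n0 where n0: "\<forall>e\<in>E. n0 \<le> deg e"
    using assms by blast
  define F where "F m = {x \<in> generators. fst x < n0 + int m}" for m :: nat
  have "mono F"
    unfolding F_def by (rule monoI) auto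
  moreover have "(\<Union>m. F m) = generators"
  proof (intro equalityI subsetI)
    fix x
    assume "x \<in> generators"
    then obtain e where "e \<in> E" "x = generator e"
      by blast
    then have "x \<in> F (nat (deg e - n0 + 1))"
      using n0 by (auto simp: F_def generator_def)
    then show "x \<in> (\<Union>m. F m)"
      by blast
  qed (auto simp: F_def)
  moreover have "diffN (fst x) (snd x) \<in> bcomb (Bset Ac) aN (\<Union>l<m. F l) (fst x - 1)" if x: "x \<in> F m" for m x
  proof -
    obtain e where e: "e \<in> E" "x = generator e" and lt: "deg e < n0 + int m"
      using x by (auto simp: F_def generator_def)
    then have "m \<ge> 1"
      using n0 by fastforce
    have "snd x \<in> Nset Ac E deg (fst x)"
      using e by (simp add: generator_def Nset_def basis_vec_mem)
    then have "diffN (fst x) (snd x) \<in> Nset Ac E deg (fst x - 1)"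
      using dN_lin unfolding lin_on_def by blast
    moreover have "{y \<in> generators. fst y \<le> fst x - 1} \<subseteq> F (m - 1)"
      using e lt \<open>m \<ge> 1\<close> by (auto simp: F_def generator_def)
    moreover have "F (m - 1) \<subseteq> (\<Union>l<m. F l)"
      using \<open>m \<ge> 1\<close> by (intro UN_upper) auto
    ultimately show ?thesis
      using N_in_span_of_lower_generators bcomb_mono by (meson subset_iff subset_trans)
  qed
  ultimately show ?thesis
    using N_free_over_B basis_vec_mem
    by (intro exI[of _ generators] exI[of _ F]) (auto simp: generator_def Nset_def)
qed

lemma DG_dN_dN:
  assumes DG "n \<in> Nset Ac E deg i"
  shows "diffN (i - 1) (diffN i n) = 0"
proof -
  have "\<forall>i. \<forall>n\<in>Nset Ac E deg i. diffN (i - 1) (diffN i n) = 0"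
    using assms(1) unfolding N_is_dg_module_def dg_module_def by (elim conjE) assumption
  then show ?thesis
    using assms(2) by blast
qed

lemma DG_leibniz:
  assumes DG "b \<in> Bset Ac i" "n \<in> Nset Ac E deg j"
  shows "diffN (i + j) (aN i j b n) = aN (i - 1) j (dB sm t dA i b) n + sgnx i (aN i (j - 1) b (diffN j n))"
proof -
  have "\<forall>i j. \<forall>b\<in>Bset Ac i. \<forall>n\<in>Nset Ac E deg j.
          diffN (i + j) (aN i j b n) = aN (i - 1) j (dB sm t dA i b) n + sgnx i (aN i (j - 1) b (diffN j n))"
    using assms(1) unfolding N_is_dg_module_def dg_module_def by (elim conjE) assumption
  then show ?thesis
    using assms(2,3) by blast
qed

lemma DG_xi_tau:
  assumes DG "m \<in> M i"
  shows "xi i m = - alpha i m \<and> tau i m = smM sm t m"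
proof -
  have "(one, 0) \<in> Bset Ac 1" and "(0, m) \<in> Nset Ac E deg i"
    using assms(2) by (simp_all add: Bset_def Nset_def one_mem)
  from DG_leibniz[OF assms(1) this] have "(xi i m, tau i m) = (0, smM sm t m) + (- alpha i m, 0)"
    using assms(2) dA_degree_zero_one
    by (simp add: actN_def dN_def dB_def actM_one actM_scale_left sgnx_def one_mem)
  then show ?thesis
    by simp
qed

lemma DG_alpha_delta:
  assumes DG "m \<in> M i"
  shows "alpha (i - 1) (alpha i m) = - smM sm t (delta i m) \<and> delta (i - 1) (alpha i m) = alpha (i - 2) (delta i m)"
proof -
  have "(0, m) \<in> Nset Ac E deg i"
    using assms(2) by (simp add: Nset_def)
  from DG_dN_dN[OF assms(1) this]
  have "(- alpha (i - 2) (delta i m) + delta (i - 1) (alpha i m), smM sm t (delta i m) + alpha (i - 1) (alpha i m)) = 0"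
    using DG_xi_tau[OF assms(1), of "delta i m" "i - 2"] assms(2) by (simp add: dN_def)
  then show ?thesis
    by (simp add: zero_prod_def eq_neg_iff_add_eq_0 add.commute neg_eq_iff_add_eq_0)
qed

lemma DG_action_rules:
  assumes DG "g \<in> Ac i" "m \<in> M j"
  shows "delta (i + j) (aM i j g m) = aM i (j - 2) g (delta j m)
       \<and> alpha (i + j) (aM i j g m) = aM (i - 1) j (dA i g) m + sgnx i (aM i (j - 1) g (alpha j m))"
proof -
  have "(0, g) \<in> Bset Ac i" and "(0, m) \<in> Nset Ac E deg j"
    using assms(2,3) by (simp_all add: Bset_def Nset_def)
  from DG_leibniz[OF assms(1) this]
  have "(delta (i + j) (aM i j g m), alpha (i + j) (aM i j g m))
     = (0, aM (i - 1) j (dA i g) m) + (aM i (j - 2) g (delta j m), sgnx i (aM i (j - 1) g (alpha j m)))"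
    using assms(2,3) by (simp add: actN_def dN_def dB_def sgnx_pair)
  then show ?thesis
    by simp
qed

context
  fixes r :: "int \<Rightarrow> nat" and gam :: "int \<Rightarrow> nat \<Rightarrow> 'a"
  assumes basis: "graded_free_basis sm Ac r gam"
    and xi_eq: "\<forall>i. \<forall>m\<in>M i. xi i m = - alpha i m"
    and tau_eq: "\<forall>i. \<forall>m\<in>M i. tau i m = smM sm t m"
    and alpha_alpha: "\<forall>i. \<forall>m\<in>M i. alpha (i - 1) (alpha i m) = - smM sm t (delta i m)"
    and delta_alpha: "\<forall>i. \<forall>m\<in>M (i + 1). delta i (alpha (i + 1) m) = alpha (i - 1) (delta (i + 1) m)"
    and delta_gam: "\<forall>i j. \<forall>s\<in>{1..r i}. \<forall>m\<in>M j. delta (i + j) (aM i j (gam i s) m) = aM i (j - 2) (gam i s) (delta j m)"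
    and alpha_gam: "\<forall>i j. \<forall>s\<in>{1..r i}. \<forall>m\<in>M j. alpha (i + j) (aM i j (gam i s) m)
                    = aM (i - 1) j (dA i (gam i s)) m + sgnx i (aM i (j - 1) (gam i s) (alpha j m))"
begin

lemma delta_act:
  assumes a: "a \<in> Ac i" and m: "m \<in> M j" and "k = i + j"
  shows "delta k (aM i j a m) = aM i (j - 2) a (delta j m)"
  unfolding \<open>k = i + j\<close>
  using basis a
proof (rule graded_free_basis_induct[where P = "\<lambda>a. delta (i + j) (aM i j a m) = aM i (j - 2) a (delta j m)"])
  show "delta (i + j) (aM i j (gam i s) m) = aM i (j - 2) (gam i s) (delta j m)" if "s \<in> {1..r i}" for s
    using delta_gam that m by blast
qed (use m in \<open>simp_all add: actM_add_left actM_scale_left delta_add delta_scale\<close>)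

lemma alpha_act:
  assumes a: "a \<in> Ac i" and m: "m \<in> M j" and "k = i + j"
  shows "alpha k (aM i j a m) = aM (i - 1) j (dA i a) m + sgnx i (aM i (j - 1) a (alpha j m))"
  unfolding \<open>k = i + j\<close>
  using basis a
proof (rule graded_free_basis_induct[where
      P = "\<lambda>a. alpha (i + j) (aM i j a m) = aM (i - 1) j (dA i a) m + sgnx i (aM i (j - 1) a (alpha j m))"])
  show "alpha (i + j) (aM i j (gam i s) m) = aM (i - 1) j (dA i (gam i s)) m + sgnx i (aM i (j - 1) (gam i s) (alpha j m))"
    if "s \<in> {1..r i}" for s
    using alpha_gam that m by blast
qed (use m in \<open>simp_all add: actM_add_left actM_scale_left smM_add smM_sgnx sgnx_add
      alpha_add alpha_scale dA_add dA_scale algebra_simps\<close>)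

lemma dN_eq:
  "m1 \<in> M (i - 1) \<Longrightarrow> m2 \<in> M i \<Longrightarrow>
     diffN i (m1, m2) = (- alpha (i - 1) m1 + delta i m2, smM sm t m1 + alpha i m2)"
  using xi_eq tau_eq by (simp add: dN_def)

lemma dN_dN:
  assumes "n \<in> Nset Ac E deg i"
  shows "diffN (i - 1) (diffN i n) = 0"
proof -
  obtain m1 m2 where n: "n = (m1, m2)" and m1: "m1 \<in> M (i - 1)" and m2: "m2 \<in> M i"
    using assms by (auto simp: Nset_def)
  have "alpha (i - 2) (alpha (i - 1) m1) = - smM sm t (delta (i - 1) m1)"
    using alpha_alpha[rule_format, of m1 "i - 1"] m1 by simp
  moreover have "delta (i - 1) (alpha i m2) = alpha (i - 2) (delta i m2)"
    using delta_alpha[rule_format, of m2 "i - 1"] m2 by simp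
  moreover have "alpha (i - 1) (alpha i m2) = - smM sm t (delta i m2)"
    using alpha_alpha m2 by blast
  ultimately show ?thesis
    using m1 m2 by (simp add: n dN_eq delta_alpha_linear_simps smM_add smM_diff zero_prod_def)
qed

lemma dN_leibniz:
  assumes "b \<in> Bset Ac i" and "n \<in> Nset Ac E deg j"
  shows "diffN (i + j) (aN i j b n) = aN (i - 1) j (dB sm t dA i b) n + sgnx i (aN i (j - 1) b (diffN j n))"
proof -
  obtain a1 a2 m1 m2 where b: "b = (a1, a2)" and n: "n = (m1, m2)"
    and a1: "a1 \<in> Ac (i - 1)" and a2: "a2 \<in> Ac i" and m1: "m1 \<in> M (j - 1)" and m2: "m2 \<in> M j"
    using assms by (auto simp: Bset_def Nset_def)
  have "alpha (i + j - 1) (aM (i - 1) j a1 m2)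
      = aM (i - 2) j (dA (i - 1) a1) m2 - sgnx i (aM (i - 1) (j - 1) a1 (alpha j m2))"
    and "alpha (i + j - 1) (aM i (j - 1) a2 m1)
      = aM (i - 1) (j - 1) (dA i a2) m1 + sgnx i (aM i (j - 2) a2 (alpha (j - 1) m1))"
    and "alpha (i + j) (aM i j a2 m2) = aM (i - 1) j (dA i a2) m2 + sgnx i (aM i (j - 1) a2 (alpha j m2))"
    using alpha_act[OF a1 m2, of "i + j - 1"] alpha_act[OF a2 m1, of "i + j - 1"] alpha_act[OF a2 m2, of "i + j"]
    by (simp_all add: sgnx_index_diff_one)
  moreover have "delta (i + j) (aM i j a2 m2) = aM i (j - 2) a2 (delta j m2)"
    and "delta (i + j - 1) (aM (i - 1) j a1 m2) = aM (i - 1) (j - 2) a1 (delta j m2)"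
    using delta_act[OF a2 m2, of "i + j"] delta_act[OF a1 m2, of "i + j - 1"] by simp_all
  ultimately show ?thesis
    using a1 a2 m1 m2
    by (simp add: b n actN_def dB_def dN_eq actM_linear_simps delta_alpha_linear_simps sgnx_pair sgnx_index_diff_one)
qed

lemma conditions_imp_DG: DG
  unfolding N_is_dg_module_def dg_module_def
  by (simp add: N_submod dN_lin dN_dN dN_leibniz actN_mem actN_add_left actN_add_right actN_scale actN_one actN_assoc)

end

lemma DG_iff_conditions:
  assumes basis: "graded_free_basis sm Ac r gam"
  shows "DG \<longleftrightarrow> (\<forall>i j.
               (\<forall>m\<in>M i. xi i m = - alpha i m)
             \<and> (\<forall>m\<in>M i. tau i m = smM sm t m)
             \<and> (\<forall>m\<in>M i. alpha (i - 1) (alpha i m) = - smM sm t (delta i m))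
             \<and> (\<forall>m\<in>M (i + 1). delta i (alpha (i + 1) m) = alpha (i - 1) (delta (i + 1) m))
             \<and> (\<forall>s\<in>{1..r i}. \<forall>m\<in>M j. delta (i + j) (aM i j (gam i s) m) = aM i (j - 2) (gam i s) (delta j m))
             \<and> (\<forall>s\<in>{1..r i}. \<forall>m\<in>M j. alpha (i + j) (aM i j (gam i s) m)
                    = aM (i - 1) j (dA i (gam i s)) m + sgnx i (aM i (j - 1) (gam i s) (alpha j m))))"
    (is "_ \<longleftrightarrow> (\<forall>i j. ?conditions i j)")
proof
  assume DG
  have gam: "gam i s \<in> Ac i" if "s \<in> {1..r i}" for i s
    using basis that unfolding graded_free_basis_def by blast
  have "delta i (alpha (i + 1) m) = alpha (i - 1) (delta (i + 1) m)" if "m \<in> M (i + 1)" for i m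
    using DG_alpha_delta[OF \<open>DG\<close> that] by simp
  then show "\<forall>i j. ?conditions i j"
    using DG_xi_tau[OF \<open>DG\<close>] DG_alpha_delta[OF \<open>DG\<close>] DG_action_rules[OF \<open>DG\<close> gam] by blast
next
  assume "\<forall>i j. ?conditions i j"
  then show DG
    by (intro conditions_imp_DG[OF basis]) blast+
qed

lemma semi_free_iff_DG:
  assumes "\<exists>n0. \<forall>e\<in>E. n0 \<le> deg e"
  shows "N_is_semi_free sm Ac mu one dA t E deg xi tau delta alpha \<longleftrightarrow> DG"
  using N_semi_free_basis[OF assms]
  unfolding N_is_semi_free_def semi_free_dg_module_def N_is_dg_module_def by blast

lemma DG_dN_eq:
  "DG \<Longrightarrow> n \<in> Nset Ac E deg i
    \<Longrightarrow> diffN i n = (- alpha (i - 1) (fst n) + delta i (snd n), smM sm t (fst n) + alpha i (snd n))"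
  using DG_xi_tau by (auto simp: Nset_def dN_def)

end

theorem lemma2p6:
  fixes sm :: "'r::comm_ring_1 \<Rightarrow> 'a::ab_group_add \<Rightarrow> 'a"
    and Ac :: "int \<Rightarrow> 'a set"
    and mu :: "int \<Rightarrow> int \<Rightarrow> 'a \<Rightarrow> 'a \<Rightarrow> 'a"
    and one :: 'a
    and dA :: "int \<Rightarrow> 'a \<Rightarrow> 'a"
    and r :: "int \<Rightarrow> nat"
    and gam :: "int \<Rightarrow> nat \<Rightarrow> 'a"
    and t :: 'r
    and E :: "'e set"
    and deg :: "'e \<Rightarrow> int"
    and xi tau delta alpha :: "int \<Rightarrow> ('e \<Rightarrow> 'a) \<Rightarrow> ('e \<Rightarrow> 'a)"
  assumes noeth: "noetherian_ring TYPE('r)"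
    and A: "comm_dg_algebra sm Ac mu one dA"
    and A_free: "graded_free_basis sm Ac r gam"
    and beta_bdd: "\<exists>n0. \<forall>e\<in>E. n0 \<le> deg e"
    and xi_lin: "\<forall>i. lin_on (smM sm) (smM sm) (Mset Ac E deg i) (Mset Ac E deg (i - 1)) (xi i)"
    and tau_lin: "\<forall>i. lin_on (smM sm) (smM sm) (Mset Ac E deg i) (Mset Ac E deg i) (tau i)"
    and delta_lin: "\<forall>i. lin_on (smM sm) (smM sm) (Mset Ac E deg i) (Mset Ac E deg (i - 2)) (delta i)"
    and alpha_lin: "\<forall>i. lin_on (smM sm) (smM sm) (Mset Ac E deg i) (Mset Ac E deg (i - 1)) (alpha i)"
  shows
    "(N_is_semi_free sm Ac mu one dA t E deg xi tau delta alpha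
        \<longleftrightarrow> N_is_dg_module sm Ac mu one dA t E deg xi tau delta alpha)
   \<and> (N_is_dg_module sm Ac mu one dA t E deg xi tau delta alpha
        \<longleftrightarrow> (\<forall>i j.
               (\<forall>m\<in>Mset Ac E deg i. xi i m = - alpha i m)
             \<and> (\<forall>m\<in>Mset Ac E deg i. tau i m = smM sm t m)
             \<and> (\<forall>m\<in>Mset Ac E deg i. alpha (i - 1) (alpha i m) = - smM sm t (delta i m))
             \<and> (\<forall>m\<in>Mset Ac E deg (i + 1). delta i (alpha (i + 1) m) = alpha (i - 1) (delta (i + 1) m))
             \<and> (\<forall>s\<in>{1..r i}. \<forall>m\<in>Mset Ac E deg j.
                  delta (i + j) (actM mu E deg i j (gam i s) m)
                    = actM mu E deg i (j - 2) (gam i s) (delta j m))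
             \<and> (\<forall>s\<in>{1..r i}. \<forall>m\<in>Mset Ac E deg j.
                  alpha (i + j) (actM mu E deg i j (gam i s) m)
                    = actM mu E deg (i - 1) j (dA i (gam i s)) m
                      + sgnx i (actM mu E deg i (j - 1) (gam i s) (alpha j m)))))
   \<and> (N_is_dg_module sm Ac mu one dA t E deg xi tau delta alpha
        \<longrightarrow> (\<forall>i. \<forall>n\<in>Nset Ac E deg i.
               dN xi tau delta alpha i n
                 = (- alpha (i - 1) (fst n) + delta i (snd n), smM sm t (fst n) + alpha i (snd n))))"
proof -
  interpret dg_algebra sm Ac mu one dA
    using A by (rule comm_dg_algebra_imp_dg_algebra)
  interpret koszul_sequence sm Ac mu one dA E deg t xi tau delta alpha
    using xi_lin tau_lin delta_lin alpha_lin by unfold_locales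
  show ?thesis
    using semi_free_iff_DG[OF beta_bdd] DG_iff_conditions[OF A_free] DG_dN_eq by blast
qed

end
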